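(* Let $A\subset\mathbb S$, $\epsilon>0$, $a\in A$, and let $x\in\mathbb{R}^n$ be $\epsilon$-trapped by $a$. Then the orbit $\{T^ix\}$ does not converge to $A$.
   Context: Work in $X=\mathbb{R}^n$ with Euclidean distance $d$ and norm $\|\cdot\|$, unit sphere $\mathbb S$. An inversion is a map $\iota=B\circ\iota_0$ where $\iota_0(x)=x/\|x\|^2$ and $B$ is an isometry fixing $0$. Let $\mathcal Z$ be a discrete group of isometries of $X$ and fix a sequence $\gamma_1,\gamma_2,\dots$ in $\mathcal Z$; set $T^0=\mathrm{id}$ and $T^ix=\gamma_i^{-1}\iota\gamma_{i-1}^{-1}\iota\cdots\gamma_1^{-1}\iota x$. For $A\subset\mathbb S$ and $r>0$, $N_r(A)$ is the open $r$-neighborhood of $A$. For $x$ with $\|T^ix\|<1$ for all $i\ge0$: $x$ $\epsilon$-orbits $A$ if $T^ix\in N_\epsilon(A)$ for all $i\ge0$; $x$ eventually $\epsilon$-orbits $A$ if this holds for all sufficiently large $i$; $x$ (equivalently its orbit) converges to $A$ if it eventually $\epsilon$-orbits $A$ for every $\epsilon>0$. For $a\in A$, the Voronoi cell is $V(a,A)=\{x:d(x,a)\le d(x,b)\text{ for all }b\in A\setminus\{a\}\}$ and $V_r(a,A)=N_r(a)\cap V(a,A)$. A point $a\in A$ is an $\epsilon$-trap (relative to $A$) if (i) $T^ia\in A$ for all $i>0$, and (ii) every $x$ that $\epsilon$-orbits $A$ and lies in $V_\epsilon(a,A)$ satisfies $T^ix\in V_\epsilon(T^ia,A)$ for all $i\ge0$.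 A point $x$ is $\epsilon$-trapped by $a$ if $a$ is an $\epsilon$-trap, $x$ $\epsilon$-orbits $A$, and $x\in V_\epsilon(a,A)$. *)

theory Defs
  imports "HOL-Analysis.Analysis"
begin

definition is_isometry :: "('a::euclidean_space \<Rightarrow> 'a) \<Rightarrow> bool" where
  "is_isometry g \<longleftrightarrow> (\<forall>x y. dist (g x) (g y) = dist x y)"

text \<open>A discrete group of isometries: a group (under composition) of bijective
  isometries in which the identity is isolated (topology of uniform convergence on
  compacts; for affine maps it suffices to test on the closed unit ball).\<close>
definition discrete_isometry_group :: "('a::euclidean_space \<Rightarrow> 'a) set \<Rightarrow> bool" where
  "discrete_isometry_group Z \<longleftrightarrow>
     (\<forall>g\<in>Z. bij g \<and> is_isometry g) \<and> id \<in> Z \<and>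
     (\<forall>g\<in>Z. \<forall>h\<in>Z. g \<circ> h \<in> Z) \<and> (\<forall>g\<in>Z. inv g \<in> Z) \<and>
     (\<exists>\<delta>>0. \<forall>g\<in>Z. (\<forall>x\<in>cball 0 1. dist (g x) x < \<delta>) \<longrightarrow> g = id)"

text \<open>Standard inversion in the unit sphere (convention: 0 is sent to 0).\<close>
definition iota0 :: "'a::euclidean_space \<Rightarrow> 'a" where
  "iota0 x = (1 / (norm x)\<^sup>2) *\<^sub>R x"

fun Tmap :: "(nat \<Rightarrow> 'a::euclidean_space \<Rightarrow> 'a) \<Rightarrow> ('a \<Rightarrow> 'a) \<Rightarrow> nat \<Rightarrow> 'a \<Rightarrow> 'a" where
  "Tmap \<gamma> \<iota> 0 x = x"
| "Tmap \<gamma> \<iota> (Suc i) x = inv (\<gamma> (Suc i)) (\<iota> (Tmap \<gamma> \<iota> i x))"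

definition nbhd :: "real \<Rightarrow> 'a::euclidean_space set \<Rightarrow> 'a set" where
  "nbhd r A = {x. \<exists>b\<in>A. dist x b < r}"

definition voronoi :: "'a::euclidean_space \<Rightarrow> 'a set \<Rightarrow> 'a set" where
  "voronoi a A = {x. \<forall>b\<in>A - {a}. dist x a \<le> dist x b}"

definition voronoi_r :: "real \<Rightarrow> 'a::euclidean_space \<Rightarrow> 'a set \<Rightarrow> 'a set" where
  "voronoi_r r a A = ball a r \<inter> voronoi a A"

definition orbit_inside :: "(nat \<Rightarrow> 'a::euclidean_space \<Rightarrow> 'a) \<Rightarrow> ('a \<Rightarrow> 'a) \<Rightarrow> 'a \<Rightarrow> bool" where
  "orbit_inside \<gamma> \<iota> x \<longleftrightarrow> (\<forall>i. norm (Tmap \<gamma> \<iota> i x) < 1)"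

definition eps_orbits where
  "eps_orbits \<gamma> \<iota> \<epsilon> A x \<longleftrightarrow> orbit_inside \<gamma> \<iota> x \<and> (\<forall>i. Tmap \<gamma> \<iota> i x \<in> nbhd \<epsilon> A)"

definition eventually_eps_orbits where
  "eventually_eps_orbits \<gamma> \<iota> \<epsilon> A x \<longleftrightarrow> orbit_inside \<gamma> \<iota> x \<and>
     (\<exists>N. \<forall>i\<ge>N. Tmap \<gamma> \<iota> i x \<in> nbhd \<epsilon> A)"

definition converges_to where
  "converges_to \<gamma> \<iota> A x \<longleftrightarrow> orbit_inside \<gamma> \<iota> x \<and>
     (\<forall>\<epsilon>>0. eventually_eps_orbits \<gamma> \<iota> \<epsilon> A x)"

definition eps_trap where
  "eps_trap \<gamma> \<iota> \<epsilon> A a \<longleftrightarrow> a \<in> A \<and> (\<forall>i>0. Tmap \<gamma> \<iota> i a \<in> A) \<and>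
     (\<forall>x. eps_orbits \<gamma> \<iota> \<epsilon> A x \<and> x \<in> voronoi_r \<epsilon> a A \<longrightarrow>
        (\<forall>i. Tmap \<gamma> \<iota> i x \<in> voronoi_r \<epsilon> (Tmap \<gamma> \<iota> i a) A))"

definition eps_trapped_by where
  "eps_trapped_by \<gamma> \<iota> \<epsilon> A a x \<longleftrightarrow> eps_trap \<gamma> \<iota> \<epsilon> A a \<and> eps_orbits \<gamma> \<iota> \<epsilon> A x \<and>
     x \<in> voronoi_r \<epsilon> a A"

end

theory Submission
  imports Defs
begin

(* For |a| = 1 one has |y| d(iota0 y, a) = d(y, a), so iota0 expands distances from points of
   the closed unit ball to points of the unit sphere; the isometries B and inv (gamma i) preserve
   them. Hence d(T^i x, T^i a) >= d(x, a) > 0 for all i. Trapping keeps T^i x in the Voronoi cell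
   of T^i a, so this is the distance from T^i x to A, which therefore never tends to 0. *)

lemma norm_mult_dist_iota0_sphere:
  fixes y a :: "'a::euclidean_space"
  assumes "y \<noteq> 0" and "norm a = 1"
  shows "norm y * dist (iota0 y) a = dist y a"
proof -
  have aa: "a \<bullet> a = 1"
    using assms(2) by (simp add: dot_square_norm)
  have "(norm y * dist (iota0 y) a)\<^sup>2 = (norm y)\<^sup>2 * (norm (iota0 y - a))\<^sup>2"
    by (simp add: dist_norm power_mult_distrib)
  also have "\<dots> = 1 - 2 * (y \<bullet> a) + (norm y)\<^sup>2"
    using assms(1) aa by (simp add: iota0_def power2_norm_eq_inner inner_diff_left
        inner_diff_right inner_commute field_simps)
  also have "\<dots> = (dist y a)\<^sup>2"
    using aa by (simp add: dist_norm power2_norm_eq_inner inner_diff_left inner_diff_right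
        inner_commute)
  finally show ?thesis
    by (simp add: power2_eq_iff_nonneg)
qed

lemma dist_le_dist_iota0_sphere:
  fixes y a :: "'a::euclidean_space"
  assumes "norm y \<le> 1" and "norm a = 1"
  shows "dist y a \<le> dist (iota0 y) (iota0 a)"
proof (cases "y = 0")
  case True
  then show ?thesis
    using assms(2) by (simp add: iota0_def)
next
  case False
  have "iota0 a = a"
    using assms(2) by (simp add: iota0_def)
  moreover have "norm y * dist (iota0 y) a \<le> dist (iota0 y) a"
    using assms(1) by (simp add: mult_left_le_one_le)
  ultimately show ?thesis
    using norm_mult_dist_iota0_sphere[OF False assms(2)] by simp
qed

lemma dist_inv_isometry:
  assumes "bij g" and "is_isometry g"
  shows "dist (inv g u) (inv g v) = dist u v"
  using assms by (metis bij_inv_eq_iff is_isometry_def)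

lemma discrete_isometry_groupD:
  assumes "discrete_isometry_group Z" and "g \<in> Z"
  shows "bij g" and "is_isometry g"
  using assms by (auto simp: discrete_isometry_group_def)

lemma dist_Tmap_Suc:
  assumes "bij (\<gamma> (Suc i))" and "is_isometry (\<gamma> (Suc i))"
  shows "dist (Tmap \<gamma> \<iota> (Suc i) x) (Tmap \<gamma> \<iota> (Suc i) y)
           = dist (\<iota> (Tmap \<gamma> \<iota> i x)) (\<iota> (Tmap \<gamma> \<iota> i y))"
  using dist_inv_isometry[OF assms] by simp

lemma dist_le_dist_Tmap_inversion:
  fixes \<gamma> :: "nat \<Rightarrow> 'a::euclidean_space \<Rightarrow> 'a"
  assumes "\<And>i. i \<ge> 1 \<Longrightarrow> bij (\<gamma> i) \<and> is_isometry (\<gamma> i)"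
    and "is_isometry B"
    and "\<And>i. norm (Tmap \<gamma> (B \<circ> iota0) i x) \<le> 1"
    and "\<And>i. norm (Tmap \<gamma> (B \<circ> iota0) i a) = 1"
  shows "dist x a \<le> dist (Tmap \<gamma> (B \<circ> iota0) i x) (Tmap \<gamma> (B \<circ> iota0) i a)"
proof (induction i)
  case 0
  then show ?case by simp
next
  case (Suc i)
  let ?T = "Tmap \<gamma> (B \<circ> iota0)"
  have "dist (?T i x) (?T i a) \<le> dist (iota0 (?T i x)) (iota0 (?T i a))"
    using dist_le_dist_iota0_sphere assms(3,4) by blast
  also have "\<dots> = dist ((B \<circ> iota0) (?T i x)) ((B \<circ> iota0) (?T i a))"
    using assms(2) by (simp add: is_isometry_def)
  also have "\<dots> = dist (?T (Suc i) x) (?T (Suc i) a)"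
    using assms(1)[of "Suc i"] dist_Tmap_Suc by (metis le_add1 plus_1_eq_Suc)
  finally show ?case
    using Suc.IH by linarith
qed

lemma voronoi_r_dist_le:
  assumes "y \<in> voronoi_r r c A" and "b \<in> A"
  shows "dist y c \<le> dist y b"
  using assms by (cases "b = c") (auto simp: voronoi_r_def voronoi_def)

theorem lemma3p4:
  fixes Z :: "('a::euclidean_space \<Rightarrow> 'a) set"
    and \<gamma> :: "nat \<Rightarrow> 'a \<Rightarrow> 'a"
    and B :: "'a \<Rightarrow> 'a"
    and A :: "'a set" and \<epsilon> :: real and a x :: 'a
  assumes "discrete_isometry_group Z"
    and "\<forall>i\<ge>1. \<gamma> i \<in> Z"
    and "is_isometry B" and "B 0 = 0"
    and "A \<subseteq> sphere 0 1"
    and "\<epsilon> > 0" and "a \<in> A"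
    and "eps_trapped_by \<gamma> (B \<circ> iota0) \<epsilon> A a x"
  shows "\<not> converges_to \<gamma> (B \<circ> iota0) A x"
proof
  assume conv: "converges_to \<gamma> (B \<circ> iota0) A x"
  let ?T = "Tmap \<gamma> (B \<circ> iota0)"
  have orbit_a: "?T i a \<in> A" for i
    using assms(7,8) by (cases "i = 0") (auto simp: eps_trapped_by_def eps_trap_def)
  have on_sphere: "norm (?T i a) = 1" for i
    using orbit_a[of i] assms(5) by auto
  have inside: "norm (?T i x) < 1" for i
    using assms(8) by (simp add: eps_trapped_by_def eps_orbits_def orbit_inside_def)
  have voronoi: "?T i x \<in> voronoi_r \<epsilon> (?T i a) A" for i
    using assms(8) by (auto simp: eps_trapped_by_def eps_trap_def)
  have far: "dist x a \<le> dist (?T i x) (?T i a)" for i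
    using assms(1-3) on_sphere inside
    by (intro dist_le_dist_Tmap_inversion) (auto intro: discrete_isometry_groupD less_imp_le)
  have "dist x a > 0"
    using inside[of 0] on_sphere[of 0] by auto
  then obtain N where "?T N x \<in> nbhd (dist x a) A"
    using conv unfolding converges_to_def eventually_eps_orbits_def by (meson order_refl)
  then obtain b where "b \<in> A" and "dist (?T N x) b < dist x a"
    by (auto simp: nbhd_def)
  then show False
    using voronoi_r_dist_le[OF voronoi] far[of N] by (meson not_le order_trans)
qed

end
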